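(* Let $G$ be a flag with vertices $v_1,\dots,v_n$ ($n\ge 6$) ordered by increasing $x$-coordinate. Then among $v_1,\dots,v_6$ there is either a separating edge $v_iv_j$ with $i<j\le 6$, or a good upper triplet $(v_i,v_j,v_k)$ with $i<j<k\le 6$, or a good lower triplet $(v_i,v_j,v_k)$ with $i<j<k\le6$.
   Context: Let $\mathcal C=S^1\times\mathbb R$ ($S^1=[0,1]$ with $0\sim1$), points $p=(p_x,p_y)$ with $0\le p_x<1$. A flag is a graph drawn on $\mathcal C$ (vertices distinct points, edges Jordan arcs, no overlapping edges, no edge through a vertex) that is complete, simple (any two edges meet in at most one point: a common endpoint or a proper crossing), monotone (every edge meets each vertical line $l_{x=a}=\{p:p_x=a\}$ at most once, no two vertices share an $x$-coordinate, no vertex has $x$-coordinate $0$), and such that $l_{x=0}$ meets every edge in its relative interior. A point $v$ is related to an $x$-monotone curve $e$ if $l_{x=v_x}$ meets $e$ in its relative interior; then $v$ is below (above) $e$ if $v_y$ is smaller (larger) than the $y$-coordinate of $l_{x=v_x}\cap e$. Two $x$-monotone curves $e,f$ are related if they do not cross, some vertical line meets both relative interiors, and all such lines meet them in the same vertical order; then $e\prec f$ means that on every vertical line meeting both relative interiors, $e$'s point has $y$-coordinate at most that of $f$'s point. For $i<j$, $V^+(v_iv_j)=\{v_s: s>j,\ v_s \text{ above } v_iv_j\}$ and $V^-(v_iv_j)=\{v_s: s>j,\ v_s \text{ below } v_iv_j\}$; $v_iv_j$ is separating if $|V^+(v_iv_j)|>1$ and $|V^-(v_iv_j)|>1$. For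 $i<j<k$, $(v_i,v_j,v_k)$ is a good upper triplet if $v_jv_k\prec v_iv_j$ and $|V^+(v_jv_k)|\le1$, and a good lower triplet if $v_iv_j\prec v_jv_k$ and $|V^-(v_jv_k)|\le1$. *)

theory Defs
  imports Complex_Main
begin

(* Encoding of a flag with n vertices v_1,...,v_n, indexed 1..n in order of
   increasing x-coordinate.  Vertex v_s = (vx s, vy s) with 0 < vx 1 < ... < vx n < 1.
   The edge v_i v_j (i < j) is monotone and crosses l_{x=0}, so it is the graph over
   the circular arc from vx j through 0 to vx i.  We lift this arc to the real
   interval [vx j, 1 + vx i] and represent the edge by a continuous function
   E i j on that interval (the lifted coordinate t corresponds to x = frac t). *)

definition edge_y :: "(nat \<Rightarrow> real) \<Rightarrow> (nat \<Rightarrow> nat \<Rightarrow> real \<Rightarrow> real) \<Rightarrow> nat \<Rightarrow> nat \<Rightarrow> real \<Rightarrow> real" where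
  "edge_y vx E i j x = E i j (if x < vx j then x + 1 else x)"

definition edge_dom :: "(nat \<Rightarrow> real) \<Rightarrow> nat \<Rightarrow> nat \<Rightarrow> real set" where
  "edge_dom vx i j = {x. 0 \<le> x \<and> x < 1 \<and> (x \<le> vx i \<or> vx j \<le> x)}"

definition edge_rint :: "(nat \<Rightarrow> real) \<Rightarrow> nat \<Rightarrow> nat \<Rightarrow> real set" where
  "edge_rint vx i j = {x. 0 \<le> x \<and> x < 1 \<and> (x < vx i \<or> vx j < x)}"

definition crosses_at :: "(nat \<Rightarrow> real) \<Rightarrow> (nat \<Rightarrow> nat \<Rightarrow> real \<Rightarrow> real) \<Rightarrow> nat \<Rightarrow> nat \<Rightarrow> nat \<Rightarrow> nat \<Rightarrow> real \<Rightarrow> bool" where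
  "crosses_at vx E i j k l x \<longleftrightarrow>
     (\<exists>\<delta>>0. (\<forall>s. 0 < s \<and> s < \<delta> \<longrightarrow>
                 edge_y vx E i j (frac (x - s)) < edge_y vx E k l (frac (x - s)) \<and>
                 edge_y vx E i j (frac (x + s)) > edge_y vx E k l (frac (x + s)))
         \<or> (\<forall>s. 0 < s \<and> s < \<delta> \<longrightarrow>
                 edge_y vx E i j (frac (x - s)) > edge_y vx E k l (frac (x - s)) \<and>
                 edge_y vx E i j (frac (x + s)) < edge_y vx E k l (frac (x + s))))"

definition is_flag :: "nat \<Rightarrow> (nat \<Rightarrow> real) \<Rightarrow> (nat \<Rightarrow> real) \<Rightarrow> (nat \<Rightarrow> nat \<Rightarrow> real \<Rightarrow> real) \<Rightarrow> bool" where
  "is_flag n vx vy E \<longleftrightarrow>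
     (\<forall>i \<in> {1..n}. 0 < vx i \<and> vx i < 1) \<and>
     (\<forall>i \<in> {1..n}. \<forall>j \<in> {1..n}. i < j \<longrightarrow> vx i < vx j) \<and>
     (\<forall>i \<in> {1..n}. \<forall>j \<in> {1..n}. i < j \<longrightarrow>
        continuous_on {vx j .. 1 + vx i} (E i j) \<and>
        E i j (vx j) = vy j \<and> E i j (1 + vx i) = vy i) \<and>
     \<comment> \<open>no edge passes through a vertex\<close>
     (\<forall>i \<in> {1..n}. \<forall>j \<in> {1..n}. \<forall>s \<in> {1..n}. i < j \<and> s \<noteq> i \<and> s \<noteq> j \<and>
        vx s \<in> edge_rint vx i j \<longrightarrow> vy s \<noteq> edge_y vx E i j (vx s)) \<and>
     \<comment> \<open>simplicity: two distinct edges meet in at most one point, which is a common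
         endpoint or a proper crossing\<close>
     (\<forall>i \<in> {1..n}. \<forall>j \<in> {1..n}. \<forall>k \<in> {1..n}. \<forall>l \<in> {1..n}.
        i < j \<and> k < l \<and> (i, j) \<noteq> (k, l) \<longrightarrow>
        (\<forall>x x'. x \<in> edge_dom vx i j \<inter> edge_dom vx k l \<and>
                edge_y vx E i j x = edge_y vx E k l x \<and>
                x' \<in> edge_dom vx i j \<inter> edge_dom vx k l \<and>
                edge_y vx E i j x' = edge_y vx E k l x' \<longrightarrow> x = x') \<and>
        (\<forall>x. x \<in> edge_dom vx i j \<inter> edge_dom vx k l \<and>
              edge_y vx E i j x = edge_y vx E k l x \<longrightarrow>
              (\<exists>m \<in> {i, j} \<inter> {k, l}. x = vx m) \<or>
              (x \<in> edge_rint vx i j \<inter> edge_rint vx k l \<and> crosses_at vx E i j k l x)))"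

definition edges_related :: "(nat \<Rightarrow> real) \<Rightarrow> (nat \<Rightarrow> nat \<Rightarrow> real \<Rightarrow> real) \<Rightarrow> nat \<Rightarrow> nat \<Rightarrow> nat \<Rightarrow> nat \<Rightarrow> bool" where
  "edges_related vx E i j k l \<longleftrightarrow>
     \<not> (\<exists>x \<in> edge_rint vx i j \<inter> edge_rint vx k l.
            edge_y vx E i j x = edge_y vx E k l x \<and> crosses_at vx E i j k l x) \<and>
     edge_rint vx i j \<inter> edge_rint vx k l \<noteq> {} \<and>
     ((\<forall>x \<in> edge_rint vx i j \<inter> edge_rint vx k l. edge_y vx E i j x \<le> edge_y vx E k l x) \<or>
      (\<forall>x \<in> edge_rint vx i j \<inter> edge_rint vx k l. edge_y vx E k l x \<le> edge_y vx E i j x))"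

definition edge_prec :: "(nat \<Rightarrow> real) \<Rightarrow> (nat \<Rightarrow> nat \<Rightarrow> real \<Rightarrow> real) \<Rightarrow> nat \<Rightarrow> nat \<Rightarrow> nat \<Rightarrow> nat \<Rightarrow> bool" where
  "edge_prec vx E i j k l \<longleftrightarrow> edges_related vx E i j k l \<and>
     (\<forall>x \<in> edge_rint vx i j \<inter> edge_rint vx k l. edge_y vx E i j x \<le> edge_y vx E k l x)"

definition Vplus :: "nat \<Rightarrow> (nat \<Rightarrow> real) \<Rightarrow> (nat \<Rightarrow> real) \<Rightarrow> (nat \<Rightarrow> nat \<Rightarrow> real \<Rightarrow> real) \<Rightarrow> nat \<Rightarrow> nat \<Rightarrow> nat set" where
  "Vplus n vx vy E i j = {s \<in> {1..n}. j < s \<and> vx s \<in> edge_rint vx i j \<and> vy s > edge_y vx E i j (vx s)}"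

definition Vminus :: "nat \<Rightarrow> (nat \<Rightarrow> real) \<Rightarrow> (nat \<Rightarrow> real) \<Rightarrow> (nat \<Rightarrow> nat \<Rightarrow> real \<Rightarrow> real) \<Rightarrow> nat \<Rightarrow> nat \<Rightarrow> nat set" where
  "Vminus n vx vy E i j = {s \<in> {1..n}. j < s \<and> vx s \<in> edge_rint vx i j \<and> vy s < edge_y vx E i j (vx s)}"

definition separating :: "nat \<Rightarrow> (nat \<Rightarrow> real) \<Rightarrow> (nat \<Rightarrow> real) \<Rightarrow> (nat \<Rightarrow> nat \<Rightarrow> real \<Rightarrow> real) \<Rightarrow> nat \<Rightarrow> nat \<Rightarrow> bool" where
  "separating n vx vy E i j \<longleftrightarrow> card (Vplus n vx vy E i j) > 1 \<and> card (Vminus n vx vy E i j) > 1"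

definition good_upper :: "nat \<Rightarrow> (nat \<Rightarrow> real) \<Rightarrow> (nat \<Rightarrow> real) \<Rightarrow> (nat \<Rightarrow> nat \<Rightarrow> real \<Rightarrow> real) \<Rightarrow> nat \<Rightarrow> nat \<Rightarrow> nat \<Rightarrow> bool" where
  "good_upper n vx vy E i j k \<longleftrightarrow> edge_prec vx E j k i j \<and> card (Vplus n vx vy E j k) \<le> 1"

definition good_lower :: "nat \<Rightarrow> (nat \<Rightarrow> real) \<Rightarrow> (nat \<Rightarrow> real) \<Rightarrow> (nat \<Rightarrow> nat \<Rightarrow> real \<Rightarrow> real) \<Rightarrow> nat \<Rightarrow> nat \<Rightarrow> nat \<Rightarrow> bool" where
  "good_lower n vx vy E i j k \<longleftrightarrow> edge_prec vx E i j j k \<and> card (Vminus n vx vy E j k) \<le> 1"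

end

theory Submission
  imports Defs
begin

text \<open>Say that \<open>v\<^sub>k\<close> is below \<open>v\<^sub>iv\<^sub>j\<close> for \<open>i < j < k\<close>. Edges sharing a vertex never cross and
  disjoint edges cross at most once, hence for \<open>a < b < c < d\<close> the vertex \<open>v\<^sub>d\<close> is below
  \<open>v\<^sub>av\<^sub>b\<close> iff it is below \<open>v\<^sub>av\<^sub>c\<close>, and \<open>v\<^sub>k\<close> below (above) \<open>v\<^sub>iv\<^sub>j\<close> gives
  \<open>v\<^sub>jv\<^sub>k \<prec> v\<^sub>iv\<^sub>j\<close> (\<open>v\<^sub>iv\<^sub>j \<prec> v\<^sub>jv\<^sub>k\<close>). So if no triplet within \<open>v\<^sub>1, \<dots>, v\<^sub>6\<close> is good,
  \<open>v\<^sub>k\<close> below \<open>v\<^sub>iv\<^sub>j\<close> forces \<open>|V\<^sup>+(v\<^sub>jv\<^sub>k)| > 1\<close> and above forces \<open>|V\<^sup>-(v\<^sub>jv\<^sub>k)| > 1\<close>.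
  Chaining this with non-separation of \<open>v\<^sub>2v\<^sub>3\<close>, \<open>v\<^sub>3v\<^sub>d\<close> and the fan property, both
  \<open>v\<^sub>4\<close> and \<open>v\<^sub>5\<close> lie below \<open>v\<^sub>2v\<^sub>3\<close> iff \<open>|V\<^sup>+(v\<^sub>2v\<^sub>3)| > 1\<close>; either way \<open>v\<^sub>2v\<^sub>3\<close> is separating.\<close>

lemma connected_nonzero_sign_eq:
  fixes g :: "real \<Rightarrow> real"
  assumes "connected S" "continuous_on S g" "0 \<notin> g ` S" "s \<in> S" "t \<in> S"
  shows "0 < g s \<longleftrightarrow> 0 < g t"
proof -
  have image: "connected (g ` S)"
    by (rule connected_continuous_image[OF assms(2,1)])
  have no_sign_change: "\<not> (g u < 0 \<and> 0 < g v)" if "u \<in> S" "v \<in> S" for u v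
    using connectedD_interval[OF image, of "g u" "g v" 0] assms(3) that by auto
  show ?thesis
    using no_sign_change[of s t] no_sign_change[of t s] assms(3-5)
    by (metis image_eqI linorder_neqE_linordered_idom)
qed

lemma IVT_strict_sign_change:
  fixes h :: "real \<Rightarrow> real"
  assumes "\<alpha> \<le> \<beta>" "continuous_on {\<alpha>..\<beta>} h" "h \<alpha> * h \<beta> < 0"
  shows "\<exists>x\<in>{\<alpha><..<\<beta>}. h x = 0"
proof (rule ccontr)
  assume "\<not> ?thesis"
  moreover have "h \<alpha> \<noteq> 0" "h \<beta> \<noteq> 0" using assms(3) by auto
  ultimately have "0 \<notin> h ` {\<alpha>..\<beta>}"
    by (force simp: less_eq_real_def)
  then have "0 < h \<alpha> \<longleftrightarrow> 0 < h \<beta>"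
    using connected_nonzero_sign_eq[OF connected_Icc assms(2)] assms(1) by auto
  then show False using assms(3) by (auto simp: mult_less_0_iff)
qed

lemma frac_below_two:
  fixes t :: real
  assumes "0 \<le> t" "t < 2"
  shows "frac t = (if t < 1 then t else t - 1)"
proof (cases "t < 1")
  case False
  then have "\<lfloor>t\<rfloor> = 1" using assms(2) by (simp add: floor_eq_iff)
  then show ?thesis using False by (simp add: frac_def)
qed (use assms in \<open>simp add: frac_eq\<close>)

lemma finite_Vplus: "finite (Vplus n vx vy E i j)"
  by (rule finite_subset[of _ "{1..n}"]) (auto simp: Vplus_def)

lemma finite_Vminus: "finite (Vminus n vx vy E i j)"
  by (rule finite_subset[of _ "{1..n}"]) (auto simp: Vminus_def)

locale flag =
  fixes n :: nat and vx vy :: "nat \<Rightarrow> real" and E :: "nat \<Rightarrow> nat \<Rightarrow> real \<Rightarrow> real"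
  assumes is_flag: "is_flag n vx vy E"
begin

lemma vx_bounds: "1 \<le> i \<Longrightarrow> i \<le> n \<Longrightarrow> 0 < vx i \<and> vx i < 1"
  using is_flag unfolding is_flag_def by auto

lemma vx_less: "1 \<le> i \<Longrightarrow> i < j \<Longrightarrow> j \<le> n \<Longrightarrow> vx i < vx j"
  using is_flag unfolding is_flag_def by auto

lemma edge_continuous:
  "1 \<le> i \<Longrightarrow> i < j \<Longrightarrow> j \<le> n \<Longrightarrow> continuous_on {vx j..1 + vx i} (E i j)"
  using is_flag unfolding is_flag_def by auto

lemma edge_start: "1 \<le> i \<Longrightarrow> i < j \<Longrightarrow> j \<le> n \<Longrightarrow> E i j (vx j) = vy j"
  using is_flag unfolding is_flag_def by auto

lemma edge_end: "1 \<le> i \<Longrightarrow> i < j \<Longrightarrow> j \<le> n \<Longrightarrow> E i j (1 + vx i) = vy i"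
  using is_flag unfolding is_flag_def by auto

lemma edge_avoids_vertex:
  "\<lbrakk>1 \<le> i; i < j; j \<le> n; 1 \<le> s; s \<le> n; s \<noteq> i; s \<noteq> j; vx s \<in> edge_rint vx i j\<rbrakk>
   \<Longrightarrow> vy s \<noteq> edge_y vx E i j (vx s)"
  using is_flag unfolding is_flag_def by auto

lemma edges_meet_at_most_once:
  assumes "1 \<le> i" "i < j" "j \<le> n" "1 \<le> k" "k < l" "l \<le> n" "(i, j) \<noteq> (k, l)"
    "x \<in> edge_dom vx i j \<inter> edge_dom vx k l" "edge_y vx E i j x = edge_y vx E k l x"
    "x' \<in> edge_dom vx i j \<inter> edge_dom vx k l" "edge_y vx E i j x' = edge_y vx E k l x'"
  shows "x = x'"
proof -
  have "i \<in> {1..n}" "j \<in> {1..n}" "k \<in> {1..n}" "l \<in> {1..n}" using assms(1-6) by auto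
  then show ?thesis using is_flag assms(2,5,7-11) unfolding is_flag_def by blast
qed

lemma lifted_point:
  assumes "1 \<le> i" "i < j" "j \<le> n" "vx j \<le> t" "t \<le> 1 + vx i"
  shows "frac t \<in> edge_dom vx i j" "edge_y vx E i j (frac t) = E i j t"
proof -
  have "0 < vx i" "vx i < 1" "0 < vx j" "vx j < 1" "vx i < vx j"
    using vx_bounds vx_less assms(1-3) by auto
  with assms(4,5) show "frac t \<in> edge_dom vx i j" "edge_y vx E i j (frac t) = E i j t"
    by (auto simp: frac_below_two edge_dom_def edge_y_def)
qed

lemma lifted_interior_point:
  assumes "1 \<le> i" "i < j" "j \<le> n" "vx j < t" "t < 1 + vx i"
  shows "frac t \<in> edge_rint vx i j"
proof -
  have "0 < vx i" "vx i < 1" "0 < vx j" "vx j < 1"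
    using vx_bounds assms(1-3) by auto
  with assms(4,5) show ?thesis
    by (auto simp: frac_below_two edge_rint_def)
qed

lemma vertex_on_edge:
  assumes "1 \<le> i" "i < j" "j \<le> n" "m \<in> {i, j}"
  shows "vx m \<in> edge_dom vx i j" "edge_y vx E i j (vx m) = vy m"
proof -
  have "0 < vx i" "vx i < 1" "0 < vx j" "vx j < 1" "vx i < vx j"
    using vx_bounds vx_less assms(1-3) by auto
  with assms show "vx m \<in> edge_dom vx i j" "edge_y vx E i j (vx m) = vy m"
    using edge_start[OF assms(1-3)] edge_end[OF assms(1-3)]
    by (auto simp: edge_dom_def edge_y_def add.commute)
qed

text \<open>By simplicity, two edges with a common endpoint meet only there.\<close>

lemma common_vertex_edges_disjoint:
  assumes "1 \<le> i" "i < j" "j \<le> n" "1 \<le> k" "k < l" "l \<le> n" "(i, j) \<noteq> (k, l)"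
    "m \<in> {i, j}" "m \<in> {k, l}" "vx j < t" "vx l < t" "t < 1 + vx i" "t < 1 + vx k"
  shows "E i j t \<noteq> E k l t"
proof
  assume meet: "E i j t = E k l t"
  have "frac t = vx m"
    using edges_meet_at_most_once[OF assms(1-7), of "frac t" "vx m"] meet
      lifted_point[OF assms(1-3), of t] lifted_point[OF assms(4-6), of t]
      vertex_on_edge[OF assms(1-3,8)] vertex_on_edge[OF assms(4-6,9)] assms(10-13)
    by auto
  moreover have "frac t \<in> edge_rint vx i j"
    using lifted_interior_point[OF assms(1-3,10,12)] .
  ultimately show False
    using assms(8) vx_less[OF assms(1-3)] by (auto simp: edge_rint_def)
qed

lemma common_vertex_edges_order_eq:
  assumes "1 \<le> i" "i < j" "j \<le> n" "1 \<le> k" "k < l" "l \<le> n" "(i, j) \<noteq> (k, l)"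
    "m \<in> {i, j}" "m \<in> {k, l}" "vx j \<le> \<alpha>" "vx l \<le> \<alpha>" "\<beta> \<le> 1 + vx i" "\<beta> \<le> 1 + vx k"
    "s \<in> {\<alpha>..\<beta>}" "t \<in> {\<alpha>..\<beta>}" "E i j s \<noteq> E k l s" "E i j t \<noteq> E k l t"
  shows "E i j s < E k l s \<longleftrightarrow> E i j t < E k l t"
proof -
  define S where "S = {min s t..max s t}"
  have "S \<subseteq> {vx j..1 + vx i}" "S \<subseteq> {vx l..1 + vx k}"
    using assms(10-15) by (auto simp: S_def)
  then have "continuous_on S (\<lambda>u. E k l u - E i j u)"
    using edge_continuous[OF assms(1-3)] edge_continuous[OF assms(4-6)]
    by (intro continuous_on_diff) (auto elim: continuous_on_subset)
  moreover have "0 \<notin> (\<lambda>u. E k l u - E i j u) ` S"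
  proof
    assume "0 \<in> (\<lambda>u. E k l u - E i j u) ` S"
    then obtain u where u: "u \<in> S" "E i j u = E k l u" by auto
    then have "u \<noteq> s" "u \<noteq> t" using assms(16,17) by auto
    then have "\<alpha> < u" "u < \<beta>" using u(1) assms(14,15) by (auto simp: S_def)
    then show False
      using common_vertex_edges_disjoint[OF assms(1-9), of u] u(2) assms(10-13) by auto
  qed
  ultimately have "0 < E k l s - E i j s \<longleftrightarrow> 0 < E k l t - E i j t"
    using connected_nonzero_sign_eq[OF connected_Icc, of "min s t" "max s t" "\<lambda>u. E k l u - E i j u" s t]
    unfolding S_def by auto
  then show ?thesis by simp
qed

lemma vertex_off_later_edge:
  assumes "1 \<le> i" "i < j" "j < k" "k \<le> n"
  shows "E i j (vx k) \<noteq> vy k"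
proof -
  have "vx j < vx k" "0 < vx k" "vx k < 1" using vx_less vx_bounds assms by auto
  then show ?thesis
    using edge_avoids_vertex[of i j k] assms by (auto simp: edge_rint_def edge_y_def)
qed

lemma vertex_off_earlier_edge:
  assumes "1 \<le> a" "a < b" "b < c" "c \<le> n"
  shows "E b c (1 + vx a) \<noteq> vy a"
proof -
  have "vx a < vx b" "vx b < vx c" "0 < vx a" "vx a < 1" using vx_less vx_bounds assms by auto
  then show ?thesis
    using edge_avoids_vertex[of b c a] assms by (auto simp: edge_rint_def edge_y_def add.commute)
qed

text \<open>For \<open>j < k\<close> the abscissa \<open>vx k\<close> lies in the lifted domain of \<open>E i j\<close>, so this says
  that \<open>v\<^sub>k\<close> lies below the edge \<open>v\<^sub>iv\<^sub>j\<close>.\<close>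
definition below :: "nat \<Rightarrow> nat \<Rightarrow> nat \<Rightarrow> bool" where
  "below i j k \<longleftrightarrow> vy k < E i j (vx k)"

lemma triangle_edges_order:
  assumes "1 \<le> a" "a < b" "b < c" "c \<le> n" "vx c < t" "t < 1 + vx a"
  shows "below a b c \<Longrightarrow> E b c t < E a c t \<and> E a c t < E a b t"
    and "\<not> below a b c \<Longrightarrow> E a b t < E a c t \<and> E a c t < E b c t"
proof -
  have ab: "1 \<le> a" "a < b" "b \<le> n" and bc: "1 \<le> b" "b < c" "c \<le> n"
    and ac: "1 \<le> a" "a < c" "c \<le> n"
    using assms(1-4) by auto
  have vx: "vx a < vx b" "vx b < vx c" "0 < vx a" "vx c < 1"
    using vx_less vx_bounds assms(1-4) by auto
  have at_c: "E b c (vx c) = vy c" "E a c (vx c) = vy c" "E a b (vx c) \<noteq> vy c"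
    using edge_start[OF bc] edge_start[OF ac] vertex_off_later_edge[OF assms(1-4)] by auto
  have at_a: "E a b (1 + vx a) = vy a" "E a c (1 + vx a) = vy a" "E b c (1 + vx a) \<noteq> vy a"
    using edge_end[OF ab] edge_end[OF ac] vertex_off_earlier_edge[OF assms(1-4)] by auto
  have at_t: "E a b t \<noteq> E a c t" "E b c t \<noteq> E a c t"
    using common_vertex_edges_disjoint[OF ab ac, of a t] common_vertex_edges_disjoint[OF bc ac, of c t]
      vx assms(5,6) by auto
  have "E b c (1 + vx a) < E a b (1 + vx a) \<longleftrightarrow> below a b c"
    using common_vertex_edges_order_eq[OF bc ab, of b "vx c" "1 + vx a" "vx c" "1 + vx a"]
      at_c at_a vx by (auto simp: below_def)
  moreover have "E a c t < E a b t \<longleftrightarrow> below a b c"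
    using common_vertex_edges_order_eq[OF ac ab, of a "vx c" "1 + vx a" t "vx c"]
      at_c at_t vx assms(5,6) by (auto simp: below_def)
  moreover have "E b c t < E a c t \<longleftrightarrow> E b c (1 + vx a) < E a c (1 + vx a)"
    using common_vertex_edges_order_eq[OF bc ac, of c "vx c" "1 + vx a" t "1 + vx a"]
      at_a at_t vx assms(5,6) by auto
  ultimately show "below a b c \<Longrightarrow> E b c t < E a c t \<and> E a c t < E a b t"
    and "\<not> below a b c \<Longrightarrow> E a b t < E a c t \<and> E a c t < E b c t"
    using at_a at_t by auto
qed

text \<open>Each equivalence says that \<open>v\<^sub>av\<^sub>b\<close> and \<open>v\<^sub>cv\<^sub>d\<close> swap their vertical order, once over
  the arc from \<open>vx b\<close> to \<open>vx c\<close> and once over the arc from \<open>vx d\<close> through \<open>0\<close> to \<open>vx a\<close>;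
  they would then meet twice.\<close>

lemma no_double_crossing:
  assumes "1 \<le> a" "a < b" "b < c" "c < d" "d \<le> n"
    and "vy b < E c d (1 + vx b) \<longleftrightarrow> vy c < E a b (vx c)"
    and "vy d < E a b (vx d) \<longleftrightarrow> vy a < E c d (1 + vx a)"
  shows False
proof -
  have ab: "1 \<le> a" "a < b" "b \<le> n" and cd: "1 \<le> c" "c < d" "d \<le> n"
    and ad: "1 \<le> a" "a < d" "d \<le> n"
    using assms(1-5) by auto
  have vx: "vx a < vx b" "vx b < vx c" "vx c < vx d" "0 < vx a" "vx d < 1"
    using vx_less vx_bounds assms(1-5) by auto
  have "vy b \<noteq> E c d (1 + vx b)" "E a b (vx c) \<noteq> vy c"
    "E a b (vx d) \<noteq> vy d" "vy a \<noteq> E c d (1 + vx a)"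
    using vertex_off_earlier_edge[of b c d] vertex_off_earlier_edge[of a c d]
      vertex_off_later_edge[of a b c] vertex_off_later_edge[of a b d] assms(1-5) by auto
  then have sign_changes:
    "(vy b - E c d (1 + vx b)) * (E a b (vx c) - vy c) < 0"
    "(E a b (vx d) - vy d) * (vy a - E c d (1 + vx a)) < 0"
    using assms(6,7) by (auto simp: mult_less_0_iff)
  have "continuous_on {vx b..vx c} (\<lambda>x. E a b x - E c d (x + 1))"
  proof (intro continuous_on_diff)
    show "continuous_on {vx b..vx c} (E a b)"
      using edge_continuous[OF ab] vx by (auto elim: continuous_on_subset)
    have "continuous_on {1 + vx b..1 + vx c} (E c d)"
      using edge_continuous[OF cd] vx by (auto elim: continuous_on_subset)
    then show "continuous_on {vx b..vx c} (\<lambda>x. E c d (x + 1))"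
      by (rule continuous_on_compose2) (auto intro!: continuous_intros)
  qed
  then obtain x where x: "x \<in> {vx b<..<vx c}" "E a b x = E c d (x + 1)"
    using IVT_strict_sign_change[of "vx b" "vx c" "\<lambda>x. E a b x - E c d (x + 1)"] sign_changes(1) vx
      edge_start[OF ab] edge_end[OF cd] by (auto simp: add.commute)
  have "continuous_on {vx d..1 + vx a} (\<lambda>t. E a b t - E c d t)"
    using edge_continuous[OF ab] edge_continuous[OF cd] vx
    by (intro continuous_on_diff) (auto elim: continuous_on_subset)
  then obtain t where t: "t \<in> {vx d<..<1 + vx a}" "E a b t = E c d t"
    using IVT_strict_sign_change[of "vx d" "1 + vx a" "\<lambda>t. E a b t - E c d t"] sign_changes(2) vx
      edge_start[OF cd] edge_end[OF ab] by auto
  have "x = frac t"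
  proof (rule edges_meet_at_most_once[OF ab cd])
    show "x \<in> edge_dom vx a b \<inter> edge_dom vx c d" "edge_y vx E a b x = edge_y vx E c d x"
      using x vx by (auto simp: edge_dom_def edge_y_def)
    show "frac t \<in> edge_dom vx a b \<inter> edge_dom vx c d"
      "edge_y vx E a b (frac t) = edge_y vx E c d (frac t)"
      using lifted_point[OF ab, of t] lifted_point[OF cd, of t] t vx by auto
  qed (use assms in auto)
  moreover have "frac t \<in> edge_rint vx a d"
    using lifted_interior_point[OF ad] t by auto
  ultimately show False
    using x vx by (auto simp: edge_rint_def)
qed

lemma below_fan_iff:
  assumes "1 \<le> a" "a < b" "b < c" "c < d" "d \<le> n"
  shows "below a b d \<longleftrightarrow> below a c d"
proof (rule ccontr)
  assume mixed: "\<not> (below a b d \<longleftrightarrow> below a c d)"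
  have ab: "1 \<le> a" "a < b" "b \<le> n" and ac: "1 \<le> a" "a < c" "c \<le> n"
    and bd: "1 \<le> b" "b < d" "d \<le> n" and cd: "1 \<le> c" "c < d" "d \<le> n"
    using assms by auto
  have vx: "vx a < vx b" "vx b < vx c" "vx c < vx d" "0 < vx a" "vx d < 1"
    using vx_less vx_bounds assms by auto
  define t where "t = (vx d + 1 + vx a) / 2"
  have t: "vx d < t" "t < 1 + vx a" using vx by (auto simp: t_def)
  have at_t: "E b d t < E c d t \<longleftrightarrow> below a b d" "E a c t < E a b t \<longleftrightarrow> below a b d"
    "E a c t < E c d t \<longleftrightarrow> below a b d"
    using triangle_edges_order[of a b d t] triangle_edges_order[of a c d t] mixed assms t
    by auto
  have "E b d t < E c d t \<longleftrightarrow> vy b < E c d (1 + vx b)"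
    using common_vertex_edges_order_eq[OF bd cd, of d "vx d" "1 + vx b" t "1 + vx b"]
      common_vertex_edges_disjoint[OF bd cd, of d t] edge_end[OF bd]
      vertex_off_earlier_edge[of b c d] assms t vx by auto
  moreover have "E a c t < E a b t \<longleftrightarrow> vy c < E a b (vx c)"
    using common_vertex_edges_order_eq[OF ac ab, of a "vx c" "1 + vx a" t "vx c"]
      common_vertex_edges_disjoint[OF ac ab, of a t] edge_start[OF ac]
      vertex_off_later_edge[of a b c] assms t vx by auto
  moreover have "E a c t < E c d t \<longleftrightarrow> vy a < E c d (1 + vx a)"
    using common_vertex_edges_order_eq[OF ac cd, of c "vx d" "1 + vx a" t "1 + vx a"]
      common_vertex_edges_disjoint[OF ac cd, of c t] edge_end[OF ac]
      vertex_off_earlier_edge[of a c d] assms t vx by auto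
  ultimately show False
    using no_double_crossing[OF assms] at_t by (auto simp: below_def)
qed

lemma consecutive_edges_order:
  assumes "1 \<le> i" "i < j" "j < k" "k \<le> n" "x \<in> edge_rint vx i j \<inter> edge_rint vx j k"
  shows "edge_y vx E j k x \<noteq> edge_y vx E i j x"
    and "edge_y vx E j k x < edge_y vx E i j x \<longleftrightarrow> below i j k"
proof -
  have ij: "1 \<le> i" "i < j" "j \<le> n" and jk: "1 \<le> j" "j < k" "k \<le> n"
    using assms(1-4) by auto
  have vx: "vx i < vx j" "vx j < vx k" "0 < vx i" "vx k < 1"
    using vx_less vx_bounds assms(1-4) by auto
  define t where "t = (if x < vx i then x + 1 else x)"
  have t: "vx k < t" "t < 1 + vx i"
    using assms(5) vx by (auto simp: t_def edge_rint_def)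
  have lift: "edge_y vx E i j x = E i j t" "edge_y vx E j k x = E j k t"
    using assms(5) vx by (auto simp: t_def edge_rint_def edge_y_def)
  have "E j k t \<noteq> E i j t"
    using common_vertex_edges_disjoint[OF jk ij, of j t] vx t by auto
  moreover have "E j k t < E i j t \<longleftrightarrow> below i j k"
    using common_vertex_edges_order_eq[OF jk ij, of j "vx k" "1 + vx i" t "vx k"]
      calculation edge_start[OF jk] vertex_off_later_edge[OF assms(1-4)] t vx
    by (auto simp: below_def)
  ultimately show "edge_y vx E j k x \<noteq> edge_y vx E i j x"
    and "edge_y vx E j k x < edge_y vx E i j x \<longleftrightarrow> below i j k"
    using lift by auto
qed

lemma zero_in_edge_rint: "1 \<le> i \<Longrightarrow> i < j \<Longrightarrow> j \<le> n \<Longrightarrow> 0 \<in> edge_rint vx i j"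
  using vx_bounds by (auto simp: edge_rint_def)

lemma edge_prec_if_below:
  assumes "1 \<le> i" "i < j" "j < k" "k \<le> n" "below i j k"
  shows "edge_prec vx E j k i j"
proof -
  have "edge_y vx E j k x < edge_y vx E i j x" if "x \<in> edge_rint vx j k \<inter> edge_rint vx i j" for x
    using consecutive_edges_order[OF assms(1-4)] assms(5) that by auto
  then show ?thesis
    using zero_in_edge_rint[of i j] zero_in_edge_rint[of j k] assms(1-4)
    unfolding edge_prec_def edges_related_def by (auto simp: less_imp_le dest: less_imp_neq)
qed

lemma edge_prec_if_above:
  assumes "1 \<le> i" "i < j" "j < k" "k \<le> n" "\<not> below i j k"
  shows "edge_prec vx E i j j k"
proof -
  have "edge_y vx E i j x < edge_y vx E j k x" if "x \<in> edge_rint vx i j \<inter> edge_rint vx j k" for x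
    using consecutive_edges_order[OF assms(1-4) that] assms(5) by auto
  then show ?thesis
    using zero_in_edge_rint[of i j] zero_in_edge_rint[of j k] assms(1-4)
    unfolding edge_prec_def edges_related_def by (auto simp: less_imp_le dest: less_imp_neq)
qed

lemma Vminus_iff_below:
  assumes "1 \<le> i" "i < j" "j < s" "s \<le> n"
  shows "s \<in> Vminus n vx vy E i j \<longleftrightarrow> below i j s"
proof -
  have "vx j < vx s" "0 < vx s" "vx s < 1" using vx_less vx_bounds assms by auto
  then show ?thesis
    using assms by (auto simp: Vminus_def below_def edge_rint_def edge_y_def)
qed

lemma Vplus_iff_not_below:
  assumes "1 \<le> i" "i < j" "j < s" "s \<le> n"
  shows "s \<in> Vplus n vx vy E i j \<longleftrightarrow> \<not> below i j s"
proof -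
  have "vx j < vx s" "0 < vx s" "vx s < 1" using vx_less vx_bounds assms by auto
  then show ?thesis
    using assms vertex_off_later_edge[OF assms]
    by (auto simp: Vplus_def below_def edge_rint_def edge_y_def)
qed

lemma Vplus_antimono:
  assumes "1 \<le> a" "a < b" "b < c" "c \<le> n"
  shows "Vplus n vx vy E a c \<subseteq> Vplus n vx vy E a b"
proof
  fix s assume s: "s \<in> Vplus n vx vy E a c"
  then have "c < s" "s \<le> n" by (auto simp: Vplus_def)
  with s show "s \<in> Vplus n vx vy E a b"
    using Vplus_iff_not_below[of a c s] Vplus_iff_not_below[of a b s] below_fan_iff[of a b c s]
      assms by auto
qed

lemma Vminus_antimono:
  assumes "1 \<le> a" "a < b" "b < c" "c \<le> n"
  shows "Vminus n vx vy E a c \<subseteq> Vminus n vx vy E a b"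
proof
  fix s assume s: "s \<in> Vminus n vx vy E a c"
  then have "c < s" "s \<le> n" by (auto simp: Vminus_def)
  with s show "s \<in> Vminus n vx vy E a b"
    using Vminus_iff_below[of a c s] Vminus_iff_below[of a b s] below_fan_iff[of a b c s]
      assms by auto
qed

end

locale flag_without_witness = flag +
  assumes six_vertices: "6 \<le> n"
    and not_separating: "\<And>i j. 1 \<le> i \<Longrightarrow> i < j \<Longrightarrow> j \<le> 6 \<Longrightarrow> \<not> separating n vx vy E i j"
    and not_good_upper:
      "\<And>i j k. 1 \<le> i \<Longrightarrow> i < j \<Longrightarrow> j < k \<Longrightarrow> k \<le> 6 \<Longrightarrow> \<not> good_upper n vx vy E i j k"
    and not_good_lower:
      "\<And>i j k. 1 \<le> i \<Longrightarrow> i < j \<Longrightarrow> j < k \<Longrightarrow> k \<le> 6 \<Longrightarrow> \<not> good_lower n vx vy E i j k"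
begin

lemma many_above_if_below:
  assumes "1 \<le> i" "i < j" "j < k" "k \<le> 6" "below i j k"
  shows "1 < card (Vplus n vx vy E j k)"
  using not_good_upper[OF assms(1-4)] edge_prec_if_below[OF assms(1-3) _ assms(5)] six_vertices
    assms(4) by (auto simp: good_upper_def)

lemma many_below_if_above:
  assumes "1 \<le> i" "i < j" "j < k" "k \<le> 6" "\<not> below i j k"
  shows "1 < card (Vminus n vx vy E j k)"
  using not_good_lower[OF assms(1-4)] edge_prec_if_above[OF assms(1-3) _ assms(5)] six_vertices
    assms(4) by (auto simp: good_lower_def)

lemma below_iff_many_above:
  assumes "1 \<le> a" "a < b" "b < c" "c < d" "d \<le> 6"
  shows "below b c d \<longleftrightarrow> 1 < card (Vplus n vx vy E b c)"
proof -
  have bounds: "b < d" "d \<le> n" using assms six_vertices by auto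
  have "below a b d \<longleftrightarrow> 1 < card (Vplus n vx vy E b c)"
  proof
    assume "below a b d"
    then have "1 < card (Vplus n vx vy E b d)"
      using many_above_if_below assms bounds by auto
    then show "1 < card (Vplus n vx vy E b c)"
      using card_mono[OF finite_Vplus Vplus_antimono[of b c d]] assms bounds by fastforce
  next
    assume "1 < card (Vplus n vx vy E b c)"
    moreover have "1 < card (Vminus n vx vy E b c)" if "\<not> below a b d"
      using many_below_if_above[of a b d] card_mono[OF finite_Vminus Vminus_antimono[of b c d]]
        that assms bounds by fastforce
    ultimately show "below a b d"
      using not_separating[of b c] assms by (auto simp: separating_def)
  qed
  moreover have "below a b d \<longleftrightarrow> below a c d"
    using below_fan_iff assms bounds by auto
  moreover have "below a c d \<longleftrightarrow> below b c d"
    using many_above_if_below[of a c d] many_below_if_above[of a c d]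
      many_above_if_below[of b c d] many_below_if_above[of b c d] not_separating[of c d] assms
    by (auto simp: separating_def)
  ultimately show ?thesis by simp
qed

end

theorem claim16:
  fixes n :: nat and vx vy :: "nat \<Rightarrow> real" and E :: "nat \<Rightarrow> nat \<Rightarrow> real \<Rightarrow> real"
  assumes "is_flag n vx vy E" and "n \<ge> 6"
  shows "(\<exists>i j. 1 \<le> i \<and> i < j \<and> j \<le> 6 \<and> separating n vx vy E i j) \<or>
         (\<exists>i j k. 1 \<le> i \<and> i < j \<and> j < k \<and> k \<le> 6 \<and> good_upper n vx vy E i j k) \<or>
         (\<exists>i j k. 1 \<le> i \<and> i < j \<and> j < k \<and> k \<le> 6 \<and> good_lower n vx vy E i j k)"
proof (rule ccontr)
  assume no_witness: "\<not> ?thesis"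
  interpret flag_without_witness n vx vy E
    by unfold_locales (use assms no_witness in blast)+
  have fourth_fifth: "below 2 3 4 \<longleftrightarrow> 1 < card (Vplus n vx vy E 2 3)"
    "below 2 3 5 \<longleftrightarrow> 1 < card (Vplus n vx vy E 2 3)"
    using below_iff_many_above[of 1 2 3 4] below_iff_many_above[of 1 2 3 5] by simp_all
  show False
  proof (cases "1 < card (Vplus n vx vy E 2 3)")
    case True
    then have "{4, 5} \<subseteq> Vminus n vx vy E 2 3"
      using fourth_fifth Vminus_iff_below[of 2 3 4] Vminus_iff_below[of 2 3 5] six_vertices by simp
    then have "card {4, 5::nat} \<le> card (Vminus n vx vy E 2 3)"
      by (rule card_mono[OF finite_Vminus])
    with True show False
      using not_separating[of 2 3] by (simp add: separating_def)
  next
    case False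
    then have "{4, 5} \<subseteq> Vplus n vx vy E 2 3"
      using fourth_fifth Vplus_iff_not_below[of 2 3 4] Vplus_iff_not_below[of 2 3 5] six_vertices
      by simp
    then have "card {4, 5::nat} \<le> card (Vplus n vx vy E 2 3)"
      by (rule card_mono[OF finite_Vplus])
    with False show False by simp
  qed
qed

end
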